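(* There exist a locally finite semilattice $T$ and a submultiplicative weight $\omega$ on $T$ such that $\ell^1_\omega(T)$ is not AMNM.
   Context: A semilattice is a commutative semigroup in which every element is idempotent; it is locally finite if every finitely generated subsemigroup is finite. A weight on $T$ is a function $\omega:T\to(0,\infty)$; it is submultiplicative if $\omega(xy)\le\omega(x)\omega(y)$ for all $x,y$. $\ell^1_\omega(T)$ is the Banach space of $a:T\to\mathbb C$ with $\|a\|=\sum_{t}|a(t)|\omega(t)<\infty$, a Banach algebra under convolution ($\delta_x*\delta_y=\delta_{xy}$). For a bounded linear map $T:A\to B$ between Banach algebras, $\operatorname{def}(T)=\sup\{\|T(xy)-T(x)T(y)\|:\|x\|,\|y\|\le1\}$; $\operatorname{Mult}(A,B)$ is the set of bounded linear multiplicative maps $A\to B$ (including $0$). A Banach algebra $A$ is AMNM if for every $\varepsilon>0$ there is $\delta>0$ such that every $\psi\in A^*$ with $\operatorname{def}(\psi)\le\delta$ satisfies $\operatorname{dist}_{A^*}(\psi,\operatorname{Mult}(A,\mathbb C))\le\varepsilon$. *)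

theory Defs
  imports "HOL-Analysis.Analysis"
begin

definition semilattice_on :: "'a set \<Rightarrow> ('a \<Rightarrow> 'a \<Rightarrow> 'a) \<Rightarrow> bool" where
  "semilattice_on S op \<longleftrightarrow>
     (\<forall>x\<in>S. \<forall>y\<in>S. op x y \<in> S) \<and>
     (\<forall>x\<in>S. \<forall>y\<in>S. \<forall>z\<in>S. op (op x y) z = op x (op y z)) \<and>
     (\<forall>x\<in>S. \<forall>y\<in>S. op x y = op y x) \<and>
     (\<forall>x\<in>S. op x x = x)"

definition gen_subsemigroup :: "('a \<Rightarrow> 'a \<Rightarrow> 'a) \<Rightarrow> 'a set \<Rightarrow> 'a set" where
  "gen_subsemigroup op F = \<Inter>{U. F \<subseteq> U \<and> (\<forall>x\<in>U. \<forall>y\<in>U. op x y \<in> U)}"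

definition locally_finite_on :: "'a set \<Rightarrow> ('a \<Rightarrow> 'a \<Rightarrow> 'a) \<Rightarrow> bool" where
  "locally_finite_on S op \<longleftrightarrow>
     (\<forall>F. F \<subseteq> S \<and> finite F \<longrightarrow> finite (gen_subsemigroup op F))"

definition weight_on :: "'a set \<Rightarrow> ('a \<Rightarrow> real) \<Rightarrow> bool" where
  "weight_on S \<omega> \<longleftrightarrow> (\<forall>t\<in>S. \<omega> t > 0)"

definition submult_weight_on :: "'a set \<Rightarrow> ('a \<Rightarrow> 'a \<Rightarrow> 'a) \<Rightarrow> ('a \<Rightarrow> real) \<Rightarrow> bool" where
  "submult_weight_on S op \<omega> \<longleftrightarrow> weight_on S \<omega> \<and>
     (\<forall>x\<in>S. \<forall>y\<in>S. \<omega> (op x y) \<le> \<omega> x * \<omega> y)"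

definition l1w :: "'a set \<Rightarrow> ('a \<Rightarrow> real) \<Rightarrow> ('a \<Rightarrow> complex) set" where
  "l1w S \<omega> = {a. (\<forall>t. t \<notin> S \<longrightarrow> a t = 0) \<and> (\<lambda>t. norm (a t) * \<omega> t) summable_on S}"

definition l1w_norm :: "'a set \<Rightarrow> ('a \<Rightarrow> real) \<Rightarrow> ('a \<Rightarrow> complex) \<Rightarrow> real" where
  "l1w_norm S \<omega> a = (\<Sum>\<^sub>\<infinity>t\<in>S. norm (a t) * \<omega> t)"

definition l1w_conv :: "'a set \<Rightarrow> ('a \<Rightarrow> 'a \<Rightarrow> 'a) \<Rightarrow> ('a \<Rightarrow> complex) \<Rightarrow> ('a \<Rightarrow> complex) \<Rightarrow> 'a \<Rightarrow> complex" where
  "l1w_conv S op a b t = (\<Sum>\<^sub>\<infinity>(x, y)\<in>{(x, y). x \<in> S \<and> y \<in> S \<and> op x y = t}. a x * b y)"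

(* bounded linear functionals on l^1_omega(S) (only values on l1w S \<omega> matter) *)
definition l1w_dual :: "'a set \<Rightarrow> ('a \<Rightarrow> real) \<Rightarrow> (('a \<Rightarrow> complex) \<Rightarrow> complex) set" where
  "l1w_dual S \<omega> = {\<psi>.
     (\<forall>a\<in>l1w S \<omega>. \<forall>b\<in>l1w S \<omega>. \<psi> (\<lambda>t. a t + b t) = \<psi> a + \<psi> b) \<and>
     (\<forall>a\<in>l1w S \<omega>. \<forall>c. \<psi> (\<lambda>t. c * a t) = c * \<psi> a) \<and>
     (\<exists>C. \<forall>a\<in>l1w S \<omega>. norm (\<psi> a) \<le> C * l1w_norm S \<omega> a)}"

definition dual_norm :: "'a set \<Rightarrow> ('a \<Rightarrow> real) \<Rightarrow> (('a \<Rightarrow> complex) \<Rightarrow> complex) \<Rightarrow> real" where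
  "dual_norm S \<omega> \<psi> = Sup {norm (\<psi> a) | a. a \<in> l1w S \<omega> \<and> l1w_norm S \<omega> a \<le> 1}"

definition mult_defect :: "'a set \<Rightarrow> ('a \<Rightarrow> 'a \<Rightarrow> 'a) \<Rightarrow> ('a \<Rightarrow> real) \<Rightarrow> (('a \<Rightarrow> complex) \<Rightarrow> complex) \<Rightarrow> real" where
  "mult_defect S op \<omega> \<psi> = Sup {norm (\<psi> (l1w_conv S op a b) - \<psi> a * \<psi> b) | a b.
      a \<in> l1w S \<omega> \<and> b \<in> l1w S \<omega> \<and> l1w_norm S \<omega> a \<le> 1 \<and> l1w_norm S \<omega> b \<le> 1}"

(* Mult(l^1_omega(S), C): bounded linear multiplicative functionals, including 0 *)
definition l1w_mult :: "'a set \<Rightarrow> ('a \<Rightarrow> 'a \<Rightarrow> 'a) \<Rightarrow> ('a \<Rightarrow> real) \<Rightarrow> (('a \<Rightarrow> complex) \<Rightarrow> complex) set" where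
  "l1w_mult S op \<omega> = {\<phi> \<in> l1w_dual S \<omega>.
     \<forall>a\<in>l1w S \<omega>. \<forall>b\<in>l1w S \<omega>. \<phi> (l1w_conv S op a b) = \<phi> a * \<phi> b}"

definition dist_mult :: "'a set \<Rightarrow> ('a \<Rightarrow> 'a \<Rightarrow> 'a) \<Rightarrow> ('a \<Rightarrow> real) \<Rightarrow> (('a \<Rightarrow> complex) \<Rightarrow> complex) \<Rightarrow> real" where
  "dist_mult S op \<omega> \<psi> = Inf {dual_norm S \<omega> (\<lambda>a. \<psi> a - \<phi> a) | \<phi>. \<phi> \<in> l1w_mult S op \<omega>}"

definition AMNM_l1w :: "'a set \<Rightarrow> ('a \<Rightarrow> 'a \<Rightarrow> 'a) \<Rightarrow> ('a \<Rightarrow> real) \<Rightarrow> bool" where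
  "AMNM_l1w S op \<omega> \<longleftrightarrow>
     (\<forall>\<epsilon>>0. \<exists>\<delta>>0. \<forall>\<psi>\<in>l1w_dual S \<omega>.
        mult_defect S op \<omega> \<psi> \<le> \<delta> \<longrightarrow> dist_mult S op \<omega> \<psi> \<le> \<epsilon>)"

end

(*
  T is the semilattice of finite subsets of the natural numbers under union.
  The naturals are cut into the blocks B_n = [2^n, 2^(n+1)), of size 2^n, and
  w(F) = 2^|U(F)|, where U(F) collects the elements of F that do not lie in a
  block entirely contained in F.  Since U(F \<union> G) \<subseteq> U(F) \<union> U(G), the weight
  is submultiplicative.  The functional psi_n sums the coefficients of the
  proper subsets of B_n.  Its multiplicative defect only comes from pairs of
  proper subsets covering B_n; such pairs have weight product at least
  2^(2^n), so the defect is at most 2^(-2^n).  On the other hand a character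
  phi takes values 0 or 1 on point masses; either phi(B_n) = 1 (where psi_n
  vanishes and w(B_n) = 1) or phi vanishes at some singleton inside B_n
  (where psi_n is 1 and the weight is 2), so psi_n has distance at least 1/2
  from every character.
*)
theory Submission
  imports Defs
begin

section \<open>General facts about weighted convolution algebras\<close>

definition point_mass :: "'a \<Rightarrow> 'a \<Rightarrow> complex" where
  "point_mass t = (\<lambda>u. if u = t then 1 else 0)"

lemma has_sum_single_support:
  assumes "t \<in> A" "\<And>x. x \<in> A \<Longrightarrow> x \<noteq> t \<Longrightarrow> f x = 0"
  shows "(f has_sum f t) A"
  by (rule has_sum_finite_neutralI[of "{t}"]) (use assms in auto)

lemma point_mass_l1w:
  assumes "t \<in> S"
  shows "(\<lambda>u. c * point_mass t u) \<in> l1w S \<omega>"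
    and "l1w_norm S \<omega> (\<lambda>u. c * point_mass t u) = norm c * \<omega> t"
proof -
  have "((\<lambda>u. norm (c * point_mass t u) * \<omega> u) has_sum norm c * \<omega> t) S"
    using has_sum_single_support[OF assms, of "\<lambda>u. norm (c * point_mass t u) * \<omega> u"]
    by (simp add: point_mass_def)
  then show "(\<lambda>u. c * point_mass t u) \<in> l1w S \<omega>"
    and "l1w_norm S \<omega> (\<lambda>u. c * point_mass t u) = norm c * \<omega> t"
    using assms by (auto simp: l1w_def l1w_norm_def point_mass_def
                         dest: has_sum_imp_summable infsumI)
qed

lemma point_mass_in_l1w: "t \<in> S \<Longrightarrow> point_mass t \<in> l1w S \<omega>"
  using point_mass_l1w(1)[of t S 1] by simp

lemma conv_point_mass:
  assumes "s \<in> S" "t \<in> S"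
  shows "l1w_conv S op (point_mass s) (point_mass t) = point_mass (op s t)"
proof
  fix u
  let ?Q = "{(x, y). x \<in> S \<and> y \<in> S \<and> op x y = u}"
  let ?g = "\<lambda>(x, y). point_mass s x * point_mass t y"
  show "l1w_conv S op (point_mass s) (point_mass t) u = point_mass (op s t) u"
  proof (cases "op s t = u")
    case True
    have "(?g has_sum ?g (s, t)) ?Q"
      by (rule has_sum_single_support)
         (use assms True in \<open>auto simp: point_mass_def split: if_splits\<close>)
    then show ?thesis
      using True by (simp add: l1w_conv_def point_mass_def infsumI)
  next
    case False
    have "infsum ?g ?Q = 0"
      by (rule infsum_0) (use False in \<open>auto simp: point_mass_def\<close>)
    then show ?thesis
      using False by (simp add: l1w_conv_def point_mass_def)
  qed
qed

lemma zero_l1w: "(\<lambda>_. 0) \<in> l1w S \<omega>" "l1w_norm S \<omega> (\<lambda>_. 0) = 0"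
  by (auto simp: l1w_def l1w_norm_def)

lemma l1w_norm_nonneg: "weight_on S \<omega> \<Longrightarrow> 0 \<le> l1w_norm S \<omega> a"
  unfolding l1w_norm_def weight_on_def by (rule infsum_nonneg) (simp add: less_imp_le)

lemma finite_sum_le_l1w_norm:
  assumes "weight_on S \<omega>" "a \<in> l1w S \<omega>" "finite P" "P \<subseteq> S"
  shows "(\<Sum>F\<in>P. norm (a F) * \<omega> F) \<le> l1w_norm S \<omega> a"
proof -
  have "infsum (\<lambda>F. norm (a F) * \<omega> F) P \<le> infsum (\<lambda>F. norm (a F) * \<omega> F) S"
    by (rule infsum_mono_neutral)
       (use assms in \<open>auto simp: l1w_def weight_on_def less_imp_le\<close>)
  then show ?thesis
    using assms by (simp add: l1w_norm_def)
qed

lemma le_dual_norm: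
  assumes "weight_on S \<omega>" and bound: "\<forall>a\<in>l1w S \<omega>. norm (\<theta> a) \<le> C * l1w_norm S \<omega> a"
    and "a \<in> l1w S \<omega>" "l1w_norm S \<omega> a \<le> 1"
  shows "norm (\<theta> a) \<le> dual_norm S \<omega> \<theta>"
  unfolding dual_norm_def
proof (rule cSup_upper)
  show "norm (\<theta> a) \<in> {norm (\<theta> a) |a. a \<in> l1w S \<omega> \<and> l1w_norm S \<omega> a \<le> 1}"
    using assms by auto
  have "norm (\<theta> b) \<le> \<bar>C\<bar>" if "b \<in> l1w S \<omega>" "l1w_norm S \<omega> b \<le> 1" for b
  proof -
    have "norm (\<theta> b) \<le> C * l1w_norm S \<omega> b"
      using bound that by blast
    also have "\<dots> \<le> \<bar>C\<bar> * l1w_norm S \<omega> b"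
      using l1w_norm_nonneg[OF assms(1)] by (intro mult_right_mono) auto
    also have "\<dots> \<le> \<bar>C\<bar>"
      using that l1w_norm_nonneg[OF assms(1)] by (intro mult_left_le) auto
    finally show ?thesis .
  qed
  then show "bdd_above {norm (\<theta> a) |a. a \<in> l1w S \<omega> \<and> l1w_norm S \<omega> a \<le> 1}"
    by (intro bdd_aboveI[of _ "\<bar>C\<bar>"]) auto
qed

lemma dual_diff_bounded:
  assumes "\<psi> \<in> l1w_dual S \<omega>" "\<phi> \<in> l1w_dual S \<omega>"
  shows "\<exists>C. \<forall>a\<in>l1w S \<omega>. norm (\<psi> a - \<phi> a) \<le> C * l1w_norm S \<omega> a"
proof -
  obtain C1 where C1: "\<forall>a\<in>l1w S \<omega>. norm (\<psi> a) \<le> C1 * l1w_norm S \<omega> a"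
    using assms(1) by (auto simp: l1w_dual_def)
  obtain C2 where C2: "\<forall>a\<in>l1w S \<omega>. norm (\<phi> a) \<le> C2 * l1w_norm S \<omega> a"
    using assms(2) by (auto simp: l1w_dual_def)
  have "norm (\<psi> a - \<phi> a) \<le> (C1 + C2) * l1w_norm S \<omega> a" if "a \<in> l1w S \<omega>" for a
    using norm_triangle_ineq4[of "\<psi> a" "\<phi> a"] C1[rule_format, OF that] C2[rule_format, OF that]
    by (simp add: distrib_right)
  then show ?thesis by blast
qed

text \<open>Testing psi - phi on the normalised point mass delta_t / w(t) gives a
  lower bound for the distance of psi from phi.\<close>
lemma point_mass_le_dual_norm:
  assumes w: "weight_on S \<omega>" and \<psi>: "\<psi> \<in> l1w_dual S \<omega>" and \<phi>: "\<phi> \<in> l1w_dual S \<omega>"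
    and t: "t \<in> S"
  shows "norm (\<psi> (point_mass t) - \<phi> (point_mass t)) / \<omega> t
           \<le> dual_norm S \<omega> (\<lambda>a. \<psi> a - \<phi> a)"
proof -
  define c where "c = complex_of_real (1 / \<omega> t)"
  have pos: "\<omega> t > 0" using w t by (simp add: weight_on_def)
  have c_norm: "norm c = 1 / \<omega> t" unfolding c_def norm_of_real using pos by simp
  have in_ball: "(\<lambda>u. c * point_mass t u) \<in> l1w S \<omega>"
                "l1w_norm S \<omega> (\<lambda>u. c * point_mass t u) \<le> 1"
    using point_mass_l1w[OF t, where c = c and \<omega> = \<omega>] pos c_norm by auto
  have "\<psi> (\<lambda>u. c * point_mass t u) - \<phi> (\<lambda>u. c * point_mass t u)
          = c * (\<psi> (point_mass t) - \<phi> (point_mass t))"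
    using \<psi> \<phi> point_mass_in_l1w[OF t]
    by (simp add: l1w_dual_def right_diff_distrib)
  moreover have "norm (\<psi> (\<lambda>u. c * point_mass t u) - \<phi> (\<lambda>u. c * point_mass t u))
                   \<le> dual_norm S \<omega> (\<lambda>a. \<psi> a - \<phi> a)"
  proof -
    obtain C where "\<forall>a\<in>l1w S \<omega>. norm (\<psi> a - \<phi> a) \<le> C * l1w_norm S \<omega> a"
      using dual_diff_bounded[OF \<psi> \<phi>] by blast
    then show ?thesis
      using le_dual_norm[OF w _ in_ball, where \<theta> = "\<lambda>a. \<psi> a - \<phi> a"] by blast
  qed
  ultimately show ?thesis
    by (simp add: norm_mult c_norm)
qed

lemma mult_defect_le:
  assumes "\<And>a b. a \<in> l1w S \<omega> \<Longrightarrow> b \<in> l1w S \<omega> \<Longrightarrow> l1w_norm S \<omega> a \<le> 1 \<Longrightarrow>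
             l1w_norm S \<omega> b \<le> 1 \<Longrightarrow> norm (\<psi> (l1w_conv S op a b) - \<psi> a * \<psi> b) \<le> d"
  shows "mult_defect S op \<omega> \<psi> \<le> d"
  unfolding mult_defect_def
proof (rule cSup_least)
  show "{norm (\<psi> (l1w_conv S op a b) - \<psi> a * \<psi> b) |a b. a \<in> l1w S \<omega> \<and> b \<in> l1w S \<omega> \<and>
          l1w_norm S \<omega> a \<le> 1 \<and> l1w_norm S \<omega> b \<le> 1} \<noteq> {}"
    using zero_l1w[of S \<omega>] by fastforce
qed (use assms in blast)

lemma zero_l1w_mult: "(\<lambda>_. 0) \<in> l1w_mult S op \<omega>"
  unfolding l1w_mult_def l1w_dual_def by (auto intro!: exI[of _ 0])

lemma dist_mult_ge:
  assumes "\<And>\<phi>. \<phi> \<in> l1w_mult S op \<omega> \<Longrightarrow> r \<le> dual_norm S \<omega> (\<lambda>a. \<psi> a - \<phi> a)"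
  shows "r \<le> dist_mult S op \<omega> \<psi>"
  unfolding dist_mult_def
proof (rule cInf_greatest)
  show "{dual_norm S \<omega> (\<lambda>a. \<psi> a - \<phi> a) |\<phi>. \<phi> \<in> l1w_mult S op \<omega>} \<noteq> {}"
    using zero_l1w_mult by blast
qed (use assms in blast)

lemma mult_point_mass:
  assumes "\<phi> \<in> l1w_mult S op \<omega>" "s \<in> S" "t \<in> S"
  shows "\<phi> (point_mass (op s t)) = \<phi> (point_mass s) * \<phi> (point_mass t)"
proof -
  have "\<phi> (l1w_conv S op (point_mass s) (point_mass t)) = \<phi> (point_mass s) * \<phi> (point_mass t)"
    using assms point_mass_in_l1w[of s S \<omega>] point_mass_in_l1w[of t S \<omega>]
    by (simp add: l1w_mult_def)
  then show ?thesis
    by (simp only: conv_point_mass[OF assms(2,3)])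
qed

lemma mult_point_mass_idempotent:
  assumes "\<phi> \<in> l1w_mult S op \<omega>" "t \<in> S" "op t t = t"
  shows "\<phi> (point_mass t) = 0 \<or> \<phi> (point_mass t) = 1"
proof -
  have "\<phi> (point_mass t) = \<phi> (point_mass t) * \<phi> (point_mass t)"
    using mult_point_mass[OF assms(1,2,2)] assms(3) by simp
  then show ?thesis
    by (metis mult_cancel_left1)
qed

lemma not_AMNM_l1w_by_sequence:
  assumes dual: "\<And>n. \<psi> n \<in> l1w_dual S \<omega>"
    and defect: "\<And>n. mult_defect S op \<omega> (\<psi> n) \<le> d n" and "d \<longlonglongrightarrow> 0"
    and dist: "\<And>n. c \<le> dist_mult S op \<omega> (\<psi> n)" and "c > 0"
  shows "\<not> AMNM_l1w S op \<omega>"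
proof
  assume "AMNM_l1w S op \<omega>"
  then obtain \<delta> where "\<delta> > 0"
    and \<delta>: "\<forall>\<psi>\<in>l1w_dual S \<omega>. mult_defect S op \<omega> \<psi> \<le> \<delta> \<longrightarrow> dist_mult S op \<omega> \<psi> \<le> c / 2"
    using \<open>c > 0\<close> unfolding AMNM_l1w_def by (meson half_gt_zero)
  obtain n where "d n < \<delta>"
    using order_tendstoD(2)[OF \<open>d \<longlonglongrightarrow> 0\<close> \<open>\<delta> > 0\<close>]
    by (auto simp: eventually_sequentially)
  then have "dist_mult S op \<omega> (\<psi> n) \<le> c / 2"
    using \<delta> dual defect by (meson less_imp_le order_trans)
  with dist[of n] \<open>c > 0\<close> show False by linarith
qed


section \<open>The semilattice of finite sets of naturals with a block weight\<close>

text \<open>The naturals (from 1 on) are cut into the blocks [2^n, 2^(n+1)) of size 2^n.\<close>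
definition block :: "nat \<Rightarrow> nat set" where
  "block n = {2^n ..< 2^Suc n}"

definition unsaturated :: "nat set \<Rightarrow> nat set" where
  "unsaturated F = {x \<in> F. \<not> (\<exists>n. x \<in> block n \<and> block n \<subseteq> F)}"

definition block_weight :: "nat set \<Rightarrow> real" where
  "block_weight F = 2 ^ card (unsaturated F)"

definition fin_sets :: "nat set set" where
  "fin_sets = {F. finite F}"

lemma finite_block: "finite (block n)"
  by (simp add: block_def)

lemma card_block: "card (block n) = 2 ^ n"
  by (simp add: block_def)

lemma block_unique:
  assumes "x \<in> block n" "x \<in> block m"
  shows "n = m"
proof -
  have False if "x \<in> block i" "x \<in> block j" "i < j" for i j
  proof -
    have "(2::nat) ^ Suc i \<le> 2 ^ j" using that(3) by (intro power_increasing) auto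
    with that(1,2) show False by (auto simp: block_def)
  qed
  with assms show ?thesis by (metis linorder_neqE_nat)
qed

text \<open>Subadditivity of the unsaturated part; it makes the weight submultiplicative.\<close>
lemma unsaturated_Un: "unsaturated (F \<union> G) \<subseteq> unsaturated F \<union> unsaturated G"
  unfolding unsaturated_def by blast

lemma unsaturated_proper_subset:
  assumes "F \<subseteq> block n" "F \<noteq> block n"
  shows "unsaturated F = F"
  unfolding unsaturated_def
  using assms block_unique by blast

lemma block_weight_block: "block_weight (block n) = 1"
proof -
  have "unsaturated (block n) = {}"
    unfolding unsaturated_def by blast
  then show ?thesis by (simp add: block_weight_def)
qed

lemma block_weight_ge_1: "1 \<le> block_weight F"
  by (simp add: block_weight_def)

lemma semilattice_fin_sets: "semilattice_on fin_sets (\<union>)"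
  unfolding semilattice_on_def fin_sets_def by auto

text \<open>The subsemigroup generated by finitely many finite sets consists of
  subsets of their (finite) union.\<close>
lemma locally_finite_fin_sets: "locally_finite_on fin_sets (\<union>)"
  unfolding locally_finite_on_def
proof (intro allI impI)
  fix F :: "nat set set"
  assume F: "F \<subseteq> fin_sets \<and> finite F"
  have "gen_subsemigroup (\<union>) F \<subseteq> Pow (\<Union>F)"
    unfolding gen_subsemigroup_def by (rule Inter_lower) auto
  moreover have "finite (Pow (\<Union>F))"
    using F by (auto simp: fin_sets_def)
  ultimately show "finite (gen_subsemigroup (\<union>) F)"
    by (rule finite_subset)
qed

lemma submult_block_weight: "submult_weight_on fin_sets (\<union>) block_weight"
  unfolding submult_weight_on_def weight_on_def
proof (intro conjI ballI)
  fix F show "0 < block_weight F" by (simp add: block_weight_def)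
next
  fix F G assume "F \<in> fin_sets" "G \<in> fin_sets"
  then have "finite (unsaturated F)" "finite (unsaturated G)"
    by (auto simp: fin_sets_def unsaturated_def)
  then have "card (unsaturated (F \<union> G)) \<le> card (unsaturated F) + card (unsaturated G)"
    using card_mono[OF _ unsaturated_Un] card_Un_le le_trans by blast
  then have "(2::real) ^ card (unsaturated (F \<union> G)) \<le> 2 ^ (card (unsaturated F) + card (unsaturated G))"
    by (intro power_increasing) auto
  then show "block_weight (F \<union> G) \<le> block_weight F * block_weight G"
    by (simp add: block_weight_def power_add)
qed

lemma weight_block_weight: "weight_on fin_sets block_weight"
  using submult_block_weight by (simp add: submult_weight_on_def)

text \<open>Two proper subsets covering a block have weight product at least
  2^(2^n): together they are unsaturated and have at least 2^n elements.\<close>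
lemma block_weight_cover:
  assumes "F \<subseteq> block n" "F \<noteq> block n" "G \<subseteq> block n" "G \<noteq> block n" "F \<union> G = block n"
  shows "2 ^ (2 ^ n) \<le> block_weight F * block_weight G"
proof -
  have "(2::nat) ^ n \<le> card F + card G"
    using card_Un_le[of F G] assms(5) card_block[of n] by simp
  then have "(2::real) ^ (2 ^ n) \<le> 2 ^ (card F + card G)"
    by (intro power_increasing) auto
  then show ?thesis
    using unsaturated_proper_subset[OF assms(1,2)] unsaturated_proper_subset[OF assms(3,4)]
    by (simp add: block_weight_def power_add)
qed


section \<open>The almost multiplicative functionals\<close>

definition proper_subsets :: "nat \<Rightarrow> nat set set" where
  "proper_subsets n = Pow (block n) - {block n}"

definition block_functional :: "nat \<Rightarrow> (nat set \<Rightarrow> complex) \<Rightarrow> complex" where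
  "block_functional n a = (\<Sum>F\<in>proper_subsets n. a F)"

definition block_covers :: "nat \<Rightarrow> (nat set \<times> nat set) set" where
  "block_covers n = {p \<in> proper_subsets n \<times> proper_subsets n. fst p \<union> snd p = block n}"

lemma finite_proper_subsets: "finite (proper_subsets n)"
  by (simp add: proper_subsets_def finite_block)

lemma proper_subsets_fin_sets: "proper_subsets n \<subseteq> fin_sets"
  using finite_block by (auto simp: proper_subsets_def fin_sets_def intro: finite_subset)

text \<open>psi_n has norm at most 1, since all weights are at least 1.\<close>
lemma block_functional_bound:
  assumes a: "a \<in> l1w fin_sets block_weight"
  shows "norm (block_functional n a) \<le> l1w_norm fin_sets block_weight a"
proof -
  have "norm (block_functional n a) \<le> (\<Sum>F\<in>proper_subsets n. norm (a F))"
    unfolding block_functional_def by (rule norm_sum)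
  also have "\<dots> \<le> (\<Sum>F\<in>proper_subsets n. norm (a F) * block_weight F)"
    by (intro sum_mono) (simp add: mult_le_cancel_left1 block_weight_ge_1)
  also have "\<dots> \<le> l1w_norm fin_sets block_weight a"
    by (rule finite_sum_le_l1w_norm[OF weight_block_weight a finite_proper_subsets
                                      proper_subsets_fin_sets])
  finally show ?thesis .
qed

lemma block_functional_dual: "block_functional n \<in> l1w_dual fin_sets block_weight"
  unfolding l1w_dual_def
proof (intro CollectI conjI ballI allI)
  fix a b :: "nat set \<Rightarrow> complex"
  show "block_functional n (\<lambda>t. a t + b t) = block_functional n a + block_functional n b"
    by (simp add: block_functional_def sum.distrib)
next
  fix a :: "nat set \<Rightarrow> complex" and c
  show "block_functional n (\<lambda>t. c * a t) = c * block_functional n a"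
    by (simp add: block_functional_def sum_distrib_left)
next
  show "\<exists>C. \<forall>a\<in>l1w fin_sets block_weight.
          norm (block_functional n a) \<le> C * l1w_norm fin_sets block_weight a"
    using block_functional_bound by (intro exI[of _ 1]) auto
qed

lemma block_functional_point_mass:
  "block_functional n (point_mass t) = (if t \<in> proper_subsets n then 1 else 0)"
  unfolding block_functional_def point_mass_def
  by (simp add: sum.delta[OF finite_proper_subsets])

lemma block_functional_conv:
  "block_functional n (l1w_conv fin_sets (\<union>) a b)
     = (\<Sum>p\<in>proper_subsets n \<times> proper_subsets n - block_covers n. a (fst p) * b (snd p))"
proof -
  let ?P = "proper_subsets n"
  let ?D = "?P \<times> ?P - block_covers n"
  let ?g = "\<lambda>p. a (fst p) * b (snd p)"
  have fD: "finite ?D" using finite_proper_subsets by auto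
  have conv: "l1w_conv fin_sets (\<union>) a b F = sum ?g {p \<in> ?D. fst p \<union> snd p = F}"
    if F: "F \<in> ?P" for F
  proof -
    have "{(x, y). x \<in> fin_sets \<and> y \<in> fin_sets \<and> x \<union> y = F} = {p \<in> ?D. fst p \<union> snd p = F}"
      using F finite_block[of n]
      by (auto simp: block_covers_def proper_subsets_def fin_sets_def intro: finite_subset)
    moreover have "finite {p \<in> ?D. fst p \<union> snd p = F}"
      by (rule finite_subset[OF _ fD]) blast
    ultimately show ?thesis
      unfolding l1w_conv_def by (simp add: case_prod_beta)
  qed
  have "block_functional n (l1w_conv fin_sets (\<union>) a b)
          = (\<Sum>F\<in>?P. sum ?g {p \<in> ?D. fst p \<union> snd p = F})"
    unfolding block_functional_def using conv by (intro sum.cong) auto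
  also have "\<dots> = sum ?g ?D"
    by (rule sum.group[OF fD finite_proper_subsets])
       (auto simp: block_covers_def proper_subsets_def)
  finally show ?thesis .
qed

lemma block_functional_defect:
  "block_functional n a * block_functional n b - block_functional n (l1w_conv fin_sets (\<union>) a b)
     = (\<Sum>p\<in>block_covers n. a (fst p) * b (snd p))"
proof -
  let ?P = "proper_subsets n"
  have "block_functional n a * block_functional n b = (\<Sum>p\<in>?P \<times> ?P. a (fst p) * b (snd p))"
    unfolding block_functional_def
    by (simp add: sum_product sum.cartesian_product case_prod_beta)
  also have "\<dots> = (\<Sum>p\<in>?P \<times> ?P - block_covers n. a (fst p) * b (snd p))
                  + (\<Sum>p\<in>block_covers n. a (fst p) * b (snd p))"
    by (rule sum.subset_diff) (auto simp: block_covers_def finite_proper_subsets)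
  finally show ?thesis
    by (simp add: block_functional_conv)
qed


text \<open>The defect of psi_n on the unit ball is at most 2^(-2^n): it is a sum over
  covering pairs, whose weight product is at least 2^(2^n).\<close>
lemma block_functional_defect_bound:
  assumes a: "a \<in> l1w fin_sets block_weight" and b: "b \<in> l1w fin_sets block_weight"
    and na: "l1w_norm fin_sets block_weight a \<le> 1" and nb: "l1w_norm fin_sets block_weight b \<le> 1"
  shows "norm (block_functional n (l1w_conv fin_sets (\<union>) a b)
                - block_functional n a * block_functional n b) \<le> (1/2) ^ (2^n)"
proof -
  let ?P = "proper_subsets n"
  let ?A = "\<lambda>x. norm (a x) * block_weight x"
  let ?B = "\<lambda>y. norm (b y) * block_weight y"
  let ?h = "\<lambda>p. (1/2) ^ (2^n) * (?A (fst p) * ?B (snd p)) :: real"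
  have nonneg: "0 \<le> ?A x" "0 \<le> ?B x" for x
    using block_weight_ge_1[of x] by auto
  have cover: "norm (a (fst p) * b (snd p)) \<le> ?h p" if "p \<in> block_covers n" for p
  proof -
    have "(2::real) ^ (2^n) \<le> block_weight (fst p) * block_weight (snd p)"
      using that by (intro block_weight_cover) (auto simp: block_covers_def proper_subsets_def)
    then have "norm (a (fst p)) * norm (b (snd p)) * 1
                 \<le> norm (a (fst p)) * norm (b (snd p))
                     * ((1/2) ^ (2^n) * (block_weight (fst p) * block_weight (snd p)))"
      by (intro mult_left_mono) (auto simp: field_simps)
    then show ?thesis by (simp add: norm_mult algebra_simps)
  qed
  have "norm (block_functional n (l1w_conv fin_sets (\<union>) a b)
                - block_functional n a * block_functional n b)
          = norm (\<Sum>p\<in>block_covers n. a (fst p) * b (snd p))"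
    by (metis block_functional_defect norm_minus_commute)
  also have "\<dots> \<le> (\<Sum>p\<in>block_covers n. norm (a (fst p) * b (snd p)))"
    by (rule norm_sum)
  also have "\<dots> \<le> sum ?h (block_covers n)"
    by (rule sum_mono) (rule cover)
  also have "\<dots> \<le> sum ?h (?P \<times> ?P)"
    by (rule sum_mono2) (use nonneg in \<open>auto simp: finite_proper_subsets block_covers_def\<close>)
  also have "\<dots> = (1/2) ^ (2^n) * (\<Sum>p\<in>?P \<times> ?P. ?A (fst p) * ?B (snd p))"
    by (simp add: sum_distrib_left)
  also have "\<dots> = (1/2) ^ (2^n) * (sum ?A ?P * sum ?B ?P)"
    unfolding sum_product sum.cartesian_product by (simp add: case_prod_beta)
  also have "\<dots> \<le> (1/2) ^ (2^n) * (1 * 1)"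
  proof -
    have "sum ?A ?P \<le> 1" "sum ?B ?P \<le> 1"
      using finite_sum_le_l1w_norm[OF weight_block_weight _ finite_proper_subsets
                                      proper_subsets_fin_sets] a b na nb
      by (meson order_trans)+
    then show ?thesis
      using nonneg by (intro mult_left_mono mult_mono sum_nonneg) auto
  qed
  finally show ?thesis by simp
qed

lemma block_functional_mult_defect:
  "mult_defect fin_sets (\<union>) block_weight (block_functional n) \<le> (1/2) ^ (2^n)"
  using block_functional_defect_bound by (intro mult_defect_le) auto

lemma character_finite_union:
  assumes \<phi>: "\<phi> \<in> l1w_mult fin_sets (\<union>) \<omega>"
    and "finite F" "F \<noteq> {}" "\<forall>i\<in>F. \<phi> (point_mass {i}) = 1"
  shows "\<phi> (point_mass F) = 1"
  using assms(2-4)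
proof (induction F rule: finite_ne_induct)
  case (singleton i)
  then show ?case by simp
next
  case (insert i F)
  have "\<phi> (point_mass ({i} \<union> F)) = \<phi> (point_mass {i}) * \<phi> (point_mass F)"
    using \<phi> insert.hyps(1) by (intro mult_point_mass) (auto simp: fin_sets_def)
  then show ?case
    using insert by simp
qed

text \<open>psi_n stays at distance at least 1/2 from every character: either the
  character is 1 at the block (where psi_n is 0 and the weight is 1), or it
  vanishes at a singleton of the block (where psi_n is 1 and the weight is 2).\<close>
lemma block_functional_dist:
  assumes n: "1 \<le> n" and \<phi>: "\<phi> \<in> l1w_mult fin_sets (\<union>) block_weight"
  shows "1/2 \<le> dual_norm fin_sets block_weight (\<lambda>a. block_functional n a - \<phi> a)"
proof -
  have test: "norm (block_functional n (point_mass t) - \<phi> (point_mass t)) / block_weight t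
                \<le> dual_norm fin_sets block_weight (\<lambda>a. block_functional n a - \<phi> a)"
    if "t \<in> fin_sets" for t
    using \<phi> that
    by (intro point_mass_le_dual_norm weight_block_weight block_functional_dual)
       (auto simp: l1w_mult_def)
  have block_in: "block n \<in> fin_sets"
    by (simp add: fin_sets_def finite_block)
  show ?thesis
  proof (cases "\<phi> (point_mass (block n)) = 1")
    case True
    have "block n \<notin> proper_subsets n" by (simp add: proper_subsets_def)
    then show ?thesis
      using test[OF block_in] True
      by (simp add: block_functional_point_mass block_weight_block)
  next
    case False
    have "block n \<noteq> {}" using card_block[of n] by auto
    then obtain i where i: "i \<in> block n" "\<phi> (point_mass {i}) \<noteq> 1"
      using character_finite_union[OF \<phi> finite_block] False by blast
    have single_in: "{i} \<in> fin_sets" by (simp add: fin_sets_def)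
    have zero: "\<phi> (point_mass {i}) = 0"
      using mult_point_mass_idempotent[OF \<phi> single_in] i(2) by auto
    have "card {i} < card (block n)"
      using card_block[of n] self_le_power[of "2::nat" n] n by simp
    then have "{i} \<noteq> block n" by (metis less_irrefl)
    then have proper: "{i} \<in> proper_subsets n"
      using i(1) by (auto simp: proper_subsets_def)
    then have "block_weight {i} = 2"
      using unsaturated_proper_subset[of "{i}" n] by (simp add: block_weight_def proper_subsets_def)
    then show ?thesis
      using test[OF single_in] zero proper by (simp add: block_functional_point_mass)
  qed
qed

theorem theoremt:
  shows "\<exists>(S :: nat set set) op \<omega>.
           semilattice_on S op \<and> locally_finite_on S op \<and> submult_weight_on S op \<omega> \<and>
           \<not> AMNM_l1w S op \<omega>"
proof (intro exI conjI)
  show "semilattice_on fin_sets (\<union>)" by (rule semilattice_fin_sets)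
  show "locally_finite_on fin_sets (\<union>)" by (rule locally_finite_fin_sets)
  show "submult_weight_on fin_sets (\<union>) block_weight" by (rule submult_block_weight)
  show "\<not> AMNM_l1w fin_sets (\<union>) block_weight"
  proof (rule not_AMNM_l1w_by_sequence)
    show "block_functional (Suc n) \<in> l1w_dual fin_sets block_weight" for n
      by (rule block_functional_dual)
    have "(1/2::real) ^ (2 ^ Suc n) \<le> (1/2) ^ n" for n
    proof (rule power_decreasing)
      show "n \<le> 2 ^ Suc n"
        using less_exp[of "Suc n"] by linarith
    qed auto
    then show "mult_defect fin_sets (\<union>) block_weight (block_functional (Suc n)) \<le> (1/2) ^ n" for n
      using block_functional_mult_defect order_trans by blast
    show "(\<lambda>n. (1/2::real) ^ n) \<longlonglongrightarrow> 0"
      by (rule LIMSEQ_power_zero) simp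
    show "1/2 \<le> dist_mult fin_sets (\<union>) block_weight (block_functional (Suc n))" for n
      using block_functional_dist by (intro dist_mult_ge) auto
  qed (simp)
qed

end
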